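(* If $G$ is a clique-regular graph with respect to a clique partition $F$, then $\mathcal E(\mathcal Q_F)=\mathcal E(G)$.
   Context: All graphs are finite and simple, $V(G)=\{1,\dots,n\}$. A clique partition of $G$ is a set $F=\{C_1,\dots,C_k\}$ of cliques such that every edge lies in exactly one $C_j$. $\mathcal M_F$ is the $n\times k$ $(0,1)$-matrix with $(i,j)$-entry $1$ iff $i\in C_j$, and $\mathcal Q_F=\mathcal M_F\mathcal M_F^T$. The clique-degree $t_i^F$ is the number of cliques of $F$ containing $i$; $G$ is clique-regular if all $t_i^F$ are equal. $\mathcal E(\mathcal Q_F)=\sum_{i=1}^n|\lambda_i(\mathcal Q_F)-\bar t|$ with $\bar t=\frac1n\sum_{i=1}^n t_i^F$, and $\mathcal E(G)=\sum_{i=1}^n|\lambda_i(G)|$ is the sum of absolute values of the adjacency eigenvalues. *)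

theory Defs
  imports "Jordan_Normal_Form.Char_Poly"
begin

text \<open>Simple graph on vertex set {0..<n} (0-based indexing of the paper's {1..n}),
  given by a symmetric irreflexive adjacency relation E.\<close>
definition simple_graph :: "nat \<Rightarrow> (nat \<Rightarrow> nat \<Rightarrow> bool) \<Rightarrow> bool" where
  "simple_graph n E \<longleftrightarrow> (\<forall>i<n. \<forall>j<n. E i j \<longrightarrow> E j i) \<and> (\<forall>i<n. \<not> E i i)"

definition is_clique :: "nat \<Rightarrow> (nat \<Rightarrow> nat \<Rightarrow> bool) \<Rightarrow> nat set \<Rightarrow> bool" where
  "is_clique n E C \<longleftrightarrow> C \<noteq> {} \<and> C \<subseteq> {0..<n} \<and> (\<forall>i\<in>C. \<forall>j\<in>C. i \<noteq> j \<longrightarrow> E i j)"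

text \<open>A clique partition F = {C_1,...,C_k}, represented as a list without repetitions
  (the list order fixes the column order of M_F).\<close>
definition clique_partition :: "nat \<Rightarrow> (nat \<Rightarrow> nat \<Rightarrow> bool) \<Rightarrow> nat set list \<Rightarrow> bool" where
  "clique_partition n E F \<longleftrightarrow> distinct F \<and> (\<forall>C\<in>set F. is_clique n E C) \<and>
     (\<forall>i<n. \<forall>j<n. E i j \<longrightarrow> (\<exists>!C. C \<in> set F \<and> i \<in> C \<and> j \<in> C))"

definition adj_matrix :: "nat \<Rightarrow> (nat \<Rightarrow> nat \<Rightarrow> bool) \<Rightarrow> real mat" where
  "adj_matrix n E = mat n n (\<lambda>(i,j). if E i j then 1 else 0)"

definition incidence_matrix :: "nat \<Rightarrow> nat set list \<Rightarrow> real mat" where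
  "incidence_matrix n F = mat n (length F) (\<lambda>(i,j). if i \<in> F ! j then 1 else 0)"

definition Q_matrix :: "nat \<Rightarrow> nat set list \<Rightarrow> real mat" where
  "Q_matrix n F = incidence_matrix n F * transpose_mat (incidence_matrix n F)"

definition clique_degree :: "nat set list \<Rightarrow> nat \<Rightarrow> nat" where
  "clique_degree F i = card {C \<in> set F. i \<in> C}"

definition clique_regular :: "nat \<Rightarrow> nat set list \<Rightarrow> bool" where
  "clique_regular n F \<longleftrightarrow> (\<exists>t. \<forall>i<n. clique_degree F i = t)"

definition avg_clique_degree :: "nat \<Rightarrow> nat set list \<Rightarrow> real" where
  "avg_clique_degree n F = (\<Sum>i<n. real (clique_degree F i)) / real n"

text \<open>Sum over the eigenvalues (with algebraic multiplicity, as roots of the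
  characteristic polynomial over \<complex>) of |lambda - c|.\<close>
definition shifted_energy :: "real mat \<Rightarrow> real \<Rightarrow> real" where
  "shifted_energy A c =
     (let p = char_poly (map_mat complex_of_real A) in
      \<Sum>z\<in>{z. poly p z = 0}. real (order z p) * cmod (z - complex_of_real c))"

definition Q_energy :: "nat \<Rightarrow> nat set list \<Rightarrow> real" where
  "Q_energy n F = shifted_energy (Q_matrix n F) (avg_clique_degree n F)"

definition graph_energy :: "nat \<Rightarrow> (nat \<Rightarrow> nat \<Rightarrow> bool) \<Rightarrow> real" where
  "graph_energy n E = shifted_energy (adj_matrix n E) 0"

end

theory Submission
  imports Defs
begin

text \<open>Entry \<open>(i, j)\<close> of \<open>Q_F = M_F M_F\<^sup>T\<close> counts the cliques of \<open>F\<close> containing both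
  \<open>i\<close> and \<open>j\<close>. Off the diagonal this is 1 for an edge (exactly one clique covers it) and 0
  otherwise, so \<open>Q_F = A(G) + diag(t\<^sub>i)\<close>. For a clique-regular partition the diagonal part
  is \<open>t I\<close> with \<open>t\<close> the average clique-degree, so the characteristic polynomial of \<open>Q_F\<close> is
  that of \<open>A(G)\<close> translated by \<open>t\<close>: roots move by \<open>t\<close> with their multiplicities, and the
  translation cancels against the centring at \<open>t\<close> in \<open>E(Q_F)\<close>.\<close>

lemma pcompose_shift_linear_power:
  "pcompose ([:-a, 1:] ^ n) [:-c, 1:] = [:-(a + c), 1:] ^ n" for a c :: "'a::comm_ring_1"
proof -
  have linear: "pcompose [:-a, 1:] [:-c, 1:] = [:-(a + c), 1:]"
    by (simp add: pcompose_pCons one_pCons)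
  show ?thesis
    by (induction n) (simp_all only: power_0 power_Suc pcompose_1 pcompose_mult linear)
qed

lemma order_pcompose_shift_ge:
  "order a p \<le> order (a + c) (pcompose p [:-c, 1:])" for a c :: "'a::idom"
proof (cases "p = 0")
  case False
  obtain q where "p = [:-a, 1:] ^ order a p * q"
    using order_1 by (blast elim: dvdE)
  then have "pcompose p [:-c, 1:] = [:-(a + c), 1:] ^ order a p * pcompose q [:-c, 1:]"
    by (metis pcompose_mult pcompose_shift_linear_power)
  moreover have "pcompose p [:-c, 1:] \<noteq> 0"
    using False by (simp add: pcompose_eq_0_iff)
  ultimately show ?thesis
    by (metis dvd_triv_left order_divides)
qed (simp add: order_def) \<comment> \<open>the junk value \<open>order x 0\<close> does not depend on \<open>x\<close>\<close>

lemma order_pcompose_shift: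
  "order (a + c) (pcompose p [:-c, 1:]) = order a p" for a c :: "'a::idom"
proof (rule antisym)
  have "pcompose (pcompose p [:-c, 1:]) [:c, 1:] = p"
    by (simp add: pcompose_assoc[symmetric] pcompose_pCons)
  then show "order (a + c) (pcompose p [:-c, 1:]) \<le> order a p"
    using order_pcompose_shift_ge[of "a + c" "pcompose p [:-c, 1:]" "-c"] by simp
qed (rule order_pcompose_shift_ge)

lemma roots_pcompose_shift:
  "{z. poly (pcompose p [:-c, 1:]) z = 0} = (\<lambda>w. w + c) ` {w. poly p w = 0}"
  for c :: "'a::comm_ring_1"
  by (force simp: poly_pcompose)

lemma char_poly_add_scalar:
  fixes B :: "'a::field_char_0 mat"
  assumes B: "B \<in> carrier_mat n n"
  shows "char_poly (B + c \<cdot>\<^sub>m 1\<^sub>m n) = pcompose (char_poly B) [:-c, 1:]"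
proof (rule poly_ext)
  fix x
  have "char_matrix (B + c \<cdot>\<^sub>m 1\<^sub>m n) x = char_matrix B (x - c)"
    using B unfolding char_matrix_def by (intro eq_matI) (auto simp: algebra_simps)
  then show "poly (char_poly (B + c \<cdot>\<^sub>m 1\<^sub>m n)) x = poly (pcompose (char_poly B) [:-c, 1:]) x"
    using B by (simp add: char_poly_matrix[of _ n] poly_pcompose)
qed

lemma shifted_energy_add_scalar:
  fixes A :: "real mat"
  assumes A: "A \<in> carrier_mat n n"
  shows "shifted_energy (A + c \<cdot>\<^sub>m 1\<^sub>m n) (b + c) = shifted_energy A b"
proof -
  define p where "p = char_poly (map_mat complex_of_real A)"
  define c' where "c' = complex_of_real c"
  have "map_mat complex_of_real (A + c \<cdot>\<^sub>m 1\<^sub>m n) = map_mat complex_of_real A + c' \<cdot>\<^sub>m 1\<^sub>m n"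
    using A unfolding c'_def by (intro eq_matI) auto
  then have char_poly_shifted:
    "char_poly (map_mat complex_of_real (A + c \<cdot>\<^sub>m 1\<^sub>m n)) = pcompose p [:-c', 1:]"
    using A unfolding p_def by (simp add: char_poly_add_scalar[of _ n])
  have "shifted_energy (A + c \<cdot>\<^sub>m 1\<^sub>m n) (b + c) =
      (\<Sum>z\<in>(\<lambda>w. w + c') ` {w. poly p w = 0}.
         real (order z (pcompose p [:-c', 1:])) * cmod (z - (complex_of_real b + c')))"
    unfolding shifted_energy_def Let_def char_poly_shifted roots_pcompose_shift c'_def by simp
  also have "\<dots> = (\<Sum>w\<in>{w. poly p w = 0}. real (order w p) * cmod (w - complex_of_real b))"
    by (subst sum.reindex) (auto simp: inj_on_def order_pcompose_shift)
  also have "\<dots> = shifted_energy A b"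
    unfolding shifted_energy_def Let_def p_def ..
  finally show ?thesis .
qed

lemma Q_matrix_entry:
  assumes "i < n" "j < n" "distinct F"
  shows "Q_matrix n F $$ (i, j) = real (card {C \<in> set F. i \<in> C \<and> j \<in> C})"
proof -
  have "Q_matrix n F $$ (i, j) = (\<Sum>k<length F. (\<lambda>C. if i \<in> C \<and> j \<in> C then 1 else 0) (F ! k))"
    using assms by (auto simp: Q_matrix_def incidence_matrix_def scalar_prod_def atLeast0LessThan
        intro!: sum.cong)
  also have "\<dots> = sum_list (map (\<lambda>C. if i \<in> C \<and> j \<in> C then 1 else 0) F)"
    by (simp add: sum_list_sum_nth atLeast0LessThan)
  also have "\<dots> = (\<Sum>C\<in>set F. if i \<in> C \<and> j \<in> C then 1 else 0)"
    using assms(3) by (rule sum_list_distinct_conv_sum_set)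
  finally show ?thesis
    by (simp add: sum.If_cases Int_def)
qed

lemma card_common_cliques:
  assumes G: "simple_graph n E" and F: "clique_partition n E F" and "i < n" "j < n"
  shows "card {C \<in> set F. i \<in> C \<and> j \<in> C} =
    (if E i j then 1 else 0) + (if i = j then clique_degree F i else 0)"
proof (cases "i = j")
  case True
  then show ?thesis
    using G \<open>i < n\<close> by (simp add: simple_graph_def clique_degree_def)
next
  case False
  show ?thesis
  proof (cases "E i j")
    case True
    then have "\<exists>!C. C \<in> set F \<and> i \<in> C \<and> j \<in> C"
      using F assms(3,4) unfolding clique_partition_def by blast
    then obtain C where "{C \<in> set F. i \<in> C \<and> j \<in> C} = {C}"
      by (elim ex1E) blast
    then show ?thesis
      using True False by simp
  next
    case nE: False
    then have "{C \<in> set F. i \<in> C \<and> j \<in> C} = {}"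
      using F False unfolding clique_partition_def is_clique_def by blast
    then show ?thesis
      using nE False by simp
  qed
qed

lemma Q_matrix_eq_adj_matrix_plus_degrees:
  assumes G: "simple_graph n E" and F: "clique_partition n E F"
  shows "Q_matrix n F = adj_matrix n E + mat_diag n (\<lambda>i. real (clique_degree F i))"
proof (rule eq_matI)
  fix i j
  assume "i < dim_row (adj_matrix n E + mat_diag n (\<lambda>i. real (clique_degree F i)))"
    and "j < dim_col (adj_matrix n E + mat_diag n (\<lambda>i. real (clique_degree F i)))"
  then have i: "i < n" and j: "j < n"
    by (simp_all add: adj_matrix_def mat_diag_def)
  have "distinct F"
    using F by (simp add: clique_partition_def)
  then show "Q_matrix n F $$ (i, j) = (adj_matrix n E + mat_diag n (\<lambda>i. real (clique_degree F i))) $$ (i, j)"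
    using i j by (simp add: Q_matrix_entry card_common_cliques[OF G F i j] adj_matrix_def mat_diag_def)
qed (simp_all add: Q_matrix_def incidence_matrix_def adj_matrix_def mat_diag_def)

lemma clique_regular_degree_matrix:
  assumes "clique_regular n F"
  shows "mat_diag n (\<lambda>i. real (clique_degree F i)) = avg_clique_degree n F \<cdot>\<^sub>m 1\<^sub>m n"
proof -
  obtain t where t: "\<And>i. i < n \<Longrightarrow> clique_degree F i = t"
    using assms unfolding clique_regular_def by blast
  have "avg_clique_degree n F = real t" if "0 < n"
    using that by (simp add: avg_clique_degree_def t)
  then show ?thesis
    by (intro eq_matI) (auto simp: mat_diag_def t)
qed

theorem mainTheorem9:
  fixes n :: nat and E :: "nat \<Rightarrow> nat \<Rightarrow> bool" and F :: "nat set list"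
  assumes "simple_graph n E"
    and "clique_partition n E F"
    and "clique_regular n F"
  shows "Q_energy n F = graph_energy n E"
proof -
  have "Q_matrix n F = adj_matrix n E + avg_clique_degree n F \<cdot>\<^sub>m 1\<^sub>m n"
    using assms by (simp add: Q_matrix_eq_adj_matrix_plus_degrees clique_regular_degree_matrix)
  moreover have "adj_matrix n E \<in> carrier_mat n n"
    by (simp add: adj_matrix_def)
  ultimately show ?thesis
    unfolding Q_energy_def graph_energy_def
    using shifted_energy_add_scalar[of _ n "avg_clique_degree n F" 0] by simp
qed

end
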